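(* Let $\hat\mu$ be a randomized base policy, i.e., a fixed probability distribution on $\mathcal U$ from which, in each slot, the action $\mathbf u$ is drawn independently of the state and of the arrivals; write $\mathbb E^{\hat\mu}$ for expectation over $\mathbf u\sim\hat\mu$. For each $n\in\mathcal N$ and $m\in\mathcal M_n$, let $(\hat\theta_{n,m},\hat V_{n,m})$, with $\hat\theta_{n,m}\in\mathbb R$ and $\hat V_{n,m}:\mathcal Q_{n,m}\to\mathbb R$, satisfy $$\hat\theta_{n,m}+\hat V_{n,m}(Q_{n,m})=\mathbb E^{\hat\mu}[g_{n,m}(Q_{n,m},\mathbf u)]+\sum_{Q'_{n,m}\in\mathcal Q_{n,m}}\mathbb E^{\hat\mu}\big[\Pr[Q'_{n,m}\mid Q_{n,m},\mathbf u]\big]\hat V_{n,m}(Q'_{n,m})\quad\forall Q_{n,m}\in\mathcal Q_{n,m},$$ where $g_{n,m}(Q_{n,m},\mathbf u)=Q_{n,m}+w\,\mathbf 1(u_n=m)p(n,m)$ and $\Pr[Q'_{n,m}\mid Q_{n,m},\mathbf u]$ is the probability that the $(n,m)$-component of the next state equals $Q'_{n,m}$ given current component $Q_{n,m}$ and action $\mathbf u$. Then $\hat\theta=\sum_{n\in\mathcal N}\sum_{m\in\mathcal M_n}\hat\theta_{n,m}$ and $\hat V(\mathbf Q)=\sum_{n\in\mathcal N}\sum_{m\in\mathcal M_n}\hat V_{n,m}(Q_{n,m})$ satisfy $$\hat\theta+\hat V(\mathbf Q)=\mathbb E^{\hat\mu}[g(\mathbf Q,\mathbf u)]+\sum_{\mathbf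 Q'\in\mathcal Q}\mathbb E^{\hat\mu}\big[\Pr[\mathbf Q'\mid\mathbf Q,\mathbf u]\big]\hat V(\mathbf Q')\quad\forall\mathbf Q\in\mathcal Q,$$ i.e., the value function of $\hat\mu$ is additively separable over BS-content pairs.
   Context: Model. Let $N\ge 1$, $\mathcal N=\{0,1,\dots,N\}$ (base station $0$ is the macro base station, MBS) and $\mathcal N^+=\{1,\dots,N\}$ (small base stations, SBSs). Let $\mathcal M=\{1,\dots,M\}$ be the set of contents. For each $n\in\mathcal N$ let $\mathcal M_n\subseteq\mathcal M$ be the set of contents cached at BS $n$, with $\mathcal M_0=\mathcal M$; put $\tilde{\mathcal M}_n=\mathcal M_n\cup\{0\}$ and $\mathcal N_m=\{n\in\mathcal N^+: m\in\mathcal M_n\}$. Powers $p(n,m)\ge 0$ are given for $n\in\mathcal N$, $m\in\mathcal M_n$, and $p(n,0)=0$. A weight $w\ge 0$ is fixed. The feasible action space is $\mathcal U=\{\mathbf u=(u_n)_{n\in\mathcal N}: u_n\in\tilde{\mathcal M}_n\ \forall n,\ u_0\sum_{n\in\mathcal N^+}u_n=0\}$. A state is $\mathbf Q=(Q_{n,m})_{n\in\mathcal N,m\in\mathcal M_n}$ with $Q_{n,m}\in\mathcal Q_{n,m}=\{0,1,\dots,N_{n,m}\}$ for given positive integers $N_{n,m}$; $\mathcal Q=\prod_{n\in\mathcal N}\prod_{m\in\mathcal M_n}\mathcal Q_{n,m}$. Arrivals $A_{n,m}$ ($n\in\mathcal N$, $m\in\mathcal M$) are mutually independent nonnegative-integer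 random variables with fixed distributions, i.i.d. across time slots; $\tilde A_{0,m}=A_{0,m}+\sum_{n\in\mathcal N^+\setminus\mathcal N_m}A_{n,m}$. Given state $\mathbf Q$ and action $\mathbf u$, the next state $\mathbf Q'$ is $Q'_{0,m}=\min\{\mathbf 1(u_0\neq m)Q_{0,m}+\tilde A_{0,m},N_{0,m}\}$ for $m\in\mathcal M_0$ and $Q'_{n,m}=\min\{\mathbf 1(u_0\neq m\text{ and }u_n\neq m)Q_{n,m}+A_{n,m},N_{n,m}\}$ for $n\in\mathcal N^+$, $m\in\mathcal M_n$; $\Pr[\mathbf Q'\mid\mathbf Q,\mathbf u]$ is the induced transition probability. The per-stage cost is $g(\mathbf Q,\mathbf u)=d(\mathbf Q)+w\,p(\mathbf u)$ with $d(\mathbf Q)=\sum_{n\in\mathcal N}\sum_{m\in\mathcal M_n}Q_{n,m}$ and $p(\mathbf u)=\sum_{n\in\mathcal N}p(n,u_n)$. *)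

theory Defs
  imports "HOL-Probability.Probability"
begin

text \<open>Base stations are 0..N (0 = MBS), contents are 1..M, action value 0 = idle.
  Mc n is the cache set of BS n; Nc n m the buffer bound N_{n,m}.\<close>

definition SIdx :: "nat \<Rightarrow> (nat \<Rightarrow> nat set) \<Rightarrow> (nat \<times> nat) set" where
  "SIdx N Mc = {(n, m). n \<le> N \<and> m \<in> Mc n}"

definition actions :: "nat \<Rightarrow> (nat \<Rightarrow> nat set) \<Rightarrow> (nat \<Rightarrow> nat) set" where
  "actions N Mc = {u. (\<forall>n\<le>N. u n \<in> Mc n \<union> {0}) \<and> (\<forall>n>N. u n = 0)
                      \<and> u 0 * (\<Sum>n\<in>{1..N}. u n) = 0}"

definition states :: "nat \<Rightarrow> (nat \<Rightarrow> nat set) \<Rightarrow> (nat \<Rightarrow> nat \<Rightarrow> nat)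
                       \<Rightarrow> (nat \<times> nat \<Rightarrow> nat) set" where
  "states N Mc Nc = {Q. (\<forall>(n, m)\<in>SIdx N Mc. Q (n, m) \<le> Nc n m)
                        \<and> (\<forall>x. x \<notin> SIdx N Mc \<longrightarrow> Q x = 0)}"

definition arrivals :: "nat \<Rightarrow> nat \<Rightarrow> (nat \<Rightarrow> nat \<Rightarrow> nat pmf) \<Rightarrow> (nat \<times> nat \<Rightarrow> nat) pmf" where
  "arrivals N M \<alpha> = Pi_pmf ({0..N} \<times> {1..M}) 0 (\<lambda>(n, m). \<alpha> n m)"

definition Atil0 :: "nat \<Rightarrow> (nat \<Rightarrow> nat set) \<Rightarrow> (nat \<times> nat \<Rightarrow> nat) \<Rightarrow> nat \<Rightarrow> nat" where
  "Atil0 N Mc A m = A (0, m) + (\<Sum>n\<in>{n\<in>{1..N}. m \<notin> Mc n}. A (n, m))"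

definition next_comp :: "nat \<Rightarrow> (nat \<Rightarrow> nat set) \<Rightarrow> (nat \<Rightarrow> nat \<Rightarrow> nat)
     \<Rightarrow> nat \<Rightarrow> nat \<Rightarrow> nat \<Rightarrow> (nat \<Rightarrow> nat) \<Rightarrow> (nat \<times> nat \<Rightarrow> nat) \<Rightarrow> nat" where
  "next_comp N Mc Nc n m q u A =
     (if n = 0 then min ((if u 0 \<noteq> m then q else 0) + Atil0 N Mc A m) (Nc 0 m)
      else min ((if u 0 \<noteq> m \<and> u n \<noteq> m then q else 0) + A (n, m)) (Nc n m))"

definition next_state :: "nat \<Rightarrow> (nat \<Rightarrow> nat set) \<Rightarrow> (nat \<Rightarrow> nat \<Rightarrow> nat)
     \<Rightarrow> (nat \<times> nat \<Rightarrow> nat) \<Rightarrow> (nat \<Rightarrow> nat) \<Rightarrow> (nat \<times> nat \<Rightarrow> nat) \<Rightarrow> (nat \<times> nat \<Rightarrow> nat)" where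
  "next_state N Mc Nc Q u A =
     (\<lambda>(n, m). if (n, m) \<in> SIdx N Mc then next_comp N Mc Nc n m (Q (n, m)) u A else 0)"

text \<open>Full-state transition kernel: Pr[Q' | Q, u] = pmf (trans_pmf ... Q u) Q'.\<close>
definition trans_pmf :: "nat \<Rightarrow> nat \<Rightarrow> (nat \<Rightarrow> nat set) \<Rightarrow> (nat \<Rightarrow> nat \<Rightarrow> nat)
     \<Rightarrow> (nat \<Rightarrow> nat \<Rightarrow> nat pmf) \<Rightarrow> (nat \<times> nat \<Rightarrow> nat) \<Rightarrow> (nat \<Rightarrow> nat) \<Rightarrow> (nat \<times> nat \<Rightarrow> nat) pmf" where
  "trans_pmf N M Mc Nc \<alpha> Q u = map_pmf (next_state N Mc Nc Q u) (arrivals N M \<alpha>)"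

text \<open>Component transition kernel: Pr[Q'_{n,m} | Q_{n,m}, u] = pmf (comp_trans_pmf ... n m q u) q'.\<close>
definition comp_trans_pmf :: "nat \<Rightarrow> nat \<Rightarrow> (nat \<Rightarrow> nat set) \<Rightarrow> (nat \<Rightarrow> nat \<Rightarrow> nat)
     \<Rightarrow> (nat \<Rightarrow> nat \<Rightarrow> nat pmf) \<Rightarrow> nat \<Rightarrow> nat \<Rightarrow> nat \<Rightarrow> (nat \<Rightarrow> nat) \<Rightarrow> nat pmf" where
  "comp_trans_pmf N M Mc Nc \<alpha> n m q u = map_pmf (next_comp N Mc Nc n m q u) (arrivals N M \<alpha>)"

text \<open>Per-stage cost g(Q,u) = d(Q) + w p(u), with p(n,0) = 0 assumed.\<close>
definition cost :: "nat \<Rightarrow> (nat \<Rightarrow> nat set) \<Rightarrow> real \<Rightarrow> (nat \<Rightarrow> nat \<Rightarrow> real)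
     \<Rightarrow> (nat \<times> nat \<Rightarrow> nat) \<Rightarrow> (nat \<Rightarrow> nat) \<Rightarrow> real" where
  "cost N Mc w p Q u = (\<Sum>(n, m)\<in>SIdx N Mc. real (Q (n, m))) + w * (\<Sum>n\<le>N. p n (u n))"

definition comp_cost :: "real \<Rightarrow> (nat \<Rightarrow> nat \<Rightarrow> real) \<Rightarrow> nat \<Rightarrow> nat \<Rightarrow> nat \<Rightarrow> (nat \<Rightarrow> nat) \<Rightarrow> real" where
  "comp_cost w p n m q u = real q + w * (if u n = m then p n m else 0)"

end

theory Submission
  imports Defs
begin

text \<open>Everything is linear: the cost is a sum of per-pair costs, and the value of the full next
  state is a sum of per-pair values whose expectations only involve the marginal laws of the
  next state, which are exactly the per-pair kernels. Summing the per-pair Bellman equations and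
  exchanging the sums with the expectation over the randomized policy gives the claim; that
  exchange is unproblematic because the policy is supported on the finite set of actions.\<close>

lemma expectation_eq_sum_pmf:
  fixes f :: "'a \<Rightarrow> real"
  assumes "finite S" and "set_pmf P \<subseteq> S"
  shows "measure_pmf.expectation P f = (\<Sum>x\<in>S. pmf P x * f x)"
  using assms by (subst integral_measure_pmf_real[of S]) (auto simp: mult.commute)

lemma expectation_mixture_pmf:
  fixes f :: "'b \<Rightarrow> real"
  assumes "finite (set_pmf \<mu>)" and "finite S"
    and "\<And>u. u \<in> set_pmf \<mu> \<Longrightarrow> set_pmf (K u) \<subseteq> S"
  shows "(\<Sum>s\<in>S. measure_pmf.expectation \<mu> (\<lambda>u. pmf (K u) s) * f s)
       = measure_pmf.expectation \<mu> (\<lambda>u. measure_pmf.expectation (K u) f)"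
proof -
  have "(\<Sum>s\<in>S. measure_pmf.expectation \<mu> (\<lambda>u. pmf (K u) s) * f s)
      = measure_pmf.expectation \<mu> (\<lambda>u. \<Sum>s\<in>S. pmf (K u) s * f s)"
    using assms(1) by (simp add: integrable_measure_pmf_finite)
  also have "\<dots> = measure_pmf.expectation \<mu> (\<lambda>u. measure_pmf.expectation (K u) f)"
    using assms by (intro integral_cong_AE) (auto simp: AE_measure_pmf_iff expectation_eq_sum_pmf[of S])
  finally show ?thesis .
qed

lemma expectation_separable_pmf:
  fixes f :: "'i \<Rightarrow> 'v \<Rightarrow> real"
  assumes "finite (set_pmf T)"
  shows "measure_pmf.expectation T (\<lambda>y. \<Sum>i\<in>I. f i (y i))
       = (\<Sum>i\<in>I. measure_pmf.expectation (map_pmf (\<lambda>y. y i) T) (f i))"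
  using assms by (simp add: integrable_measure_pmf_finite)

lemma finite_cache_sets:
  fixes N M :: nat and Mc :: "nat \<Rightarrow> nat set"
  assumes "Mc 0 = {1..M}" and "\<forall>n\<in>{1..N}. Mc n \<subseteq> {1..M}"
  shows "\<forall>n\<le>N. finite (Mc n)"
proof (intro allI impI)
  fix n assume "n \<le> N"
  then have "n = 0 \<or> n \<in> {1..N}"
    by auto
  then have "Mc n \<subseteq> {1..M}"
    using assms by auto
  then show "finite (Mc n)"
    by (rule finite_subset) simp
qed

lemma SIdx_eq_Sigma: "SIdx N Mc = Sigma {..N} Mc"
  by (auto simp: SIdx_def)

lemma finite_SIdx: "\<forall>n\<le>N. finite (Mc n) \<Longrightarrow> finite (SIdx N Mc)"
  by (auto simp: SIdx_eq_Sigma)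

lemma finite_states:
  assumes "finite (SIdx N Mc)"
  shows "finite (states N Mc Nc)"
proof (rule finite_subset)
  let ?B = "\<Union>(n, m)\<in>SIdx N Mc. {0..Nc n m}"
  show "states N Mc Nc \<subseteq> {Q. \<forall>x. (x \<in> SIdx N Mc \<longrightarrow> Q x \<in> ?B) \<and> (x \<notin> SIdx N Mc \<longrightarrow> Q x = 0)}"
    by (fastforce simp: states_def)
  show "finite {Q. \<forall>x. (x \<in> SIdx N Mc \<longrightarrow> Q x \<in> ?B) \<and> (x \<notin> SIdx N Mc \<longrightarrow> Q x = 0)}"
    using assms by (intro finite_set_of_finite_funs) auto
qed

lemma finite_actions:
  assumes "\<forall>n\<le>N. finite (Mc n)"
  shows "finite (actions N Mc)"
proof (rule finite_subset)
  let ?B = "insert 0 (\<Union>n\<le>N. Mc n)"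
  show "actions N Mc \<subseteq> {u. \<forall>n. (n \<in> {..N} \<longrightarrow> u n \<in> ?B) \<and> (n \<notin> {..N} \<longrightarrow> u n = 0)}"
    by (auto simp: actions_def)
  show "finite {u. \<forall>n. (n \<in> {..N} \<longrightarrow> u n \<in> ?B) \<and> (n \<notin> {..N} \<longrightarrow> u n = 0)}"
    using assms by (intro finite_set_of_finite_funs) auto
qed

lemma next_comp_le: "next_comp N Mc Nc n m q u A \<le> Nc n m"
  by (auto simp: next_comp_def)

lemma set_comp_trans_pmf: "set_pmf (comp_trans_pmf N M Mc Nc \<alpha> n m q u) \<subseteq> {0..Nc n m}"
  by (auto simp: comp_trans_pmf_def next_comp_le)

lemma set_trans_pmf: "set_pmf (trans_pmf N M Mc Nc \<alpha> Q u) \<subseteq> states N Mc Nc"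
  by (auto simp: trans_pmf_def states_def next_state_def next_comp_le)

lemma marginal_trans_pmf:
  assumes "(n, m) \<in> SIdx N Mc"
  shows "map_pmf (\<lambda>Q'. Q' (n, m)) (trans_pmf N M Mc Nc \<alpha> Q u)
       = comp_trans_pmf N M Mc Nc \<alpha> n m (Q (n, m)) u"
  using assms by (simp add: trans_pmf_def comp_trans_pmf_def pmf.map_comp o_def next_state_def)

lemma expectation_trans_pmf_separable:
  fixes V :: "nat \<Rightarrow> nat \<Rightarrow> nat \<Rightarrow> real"
  assumes "finite (SIdx N Mc)"
  shows "measure_pmf.expectation (trans_pmf N M Mc Nc \<alpha> Q u) (\<lambda>Q'. \<Sum>(n, m)\<in>SIdx N Mc. V n m (Q' (n, m)))
       = (\<Sum>(n, m)\<in>SIdx N Mc. measure_pmf.expectation (comp_trans_pmf N M Mc Nc \<alpha> n m (Q (n, m)) u) (V n m))"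
proof -
  have "finite (set_pmf (trans_pmf N M Mc Nc \<alpha> Q u))"
    using set_trans_pmf finite_states[OF assms] by (rule finite_subset)
  then have "measure_pmf.expectation (trans_pmf N M Mc Nc \<alpha> Q u) (\<lambda>Q'. \<Sum>(n, m)\<in>SIdx N Mc. V n m (Q' (n, m)))
      = (\<Sum>(n, m)\<in>SIdx N Mc. measure_pmf.expectation (map_pmf (\<lambda>Q'. Q' (n, m)) (trans_pmf N M Mc Nc \<alpha> Q u)) (V n m))"
    using expectation_separable_pmf[where I="SIdx N Mc" and f="\<lambda>(n, m). V n m"]
    by (simp add: case_prod_beta del: integral_map_pmf)
  also have "\<dots> = (\<Sum>(n, m)\<in>SIdx N Mc. measure_pmf.expectation (comp_trans_pmf N M Mc Nc \<alpha> n m (Q (n, m)) u) (V n m))"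
    by (intro sum.cong) (auto simp: marginal_trans_pmf simp del: integral_map_pmf)
  finally show ?thesis .
qed

lemma cost_eq_sum_comp_cost:
  assumes "\<forall>n\<le>N. finite (Mc n)" and "\<forall>n\<le>N. p n 0 = 0" and "u \<in> actions N Mc"
  shows "cost N Mc w p Q u = (\<Sum>(n, m)\<in>SIdx N Mc. comp_cost w p n m (Q (n, m)) u)"
proof -
  have "(\<Sum>(n, m)\<in>SIdx N Mc. if u n = m then p n m else 0)
      = (\<Sum>n\<le>N. \<Sum>m\<in>Mc n. if u n = m then p n m else 0)"
    unfolding SIdx_eq_Sigma using assms(1) by (subst sum.Sigma) auto
  also have "\<dots> = (\<Sum>n\<le>N. p n (u n))"
    using assms by (intro sum.cong) (auto simp: actions_def)
  finally show ?thesis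
    by (simp add: cost_def comp_cost_def sum.distrib case_prod_beta flip: sum_distrib_left)
qed

lemma cost_plus_expected_value_separable:
  fixes V :: "nat \<Rightarrow> nat \<Rightarrow> nat \<Rightarrow> real"
  assumes "\<forall>n\<le>N. finite (Mc n)" and "\<forall>n\<le>N. p n 0 = 0" and "u \<in> actions N Mc"
  shows "cost N Mc w p Q u
           + measure_pmf.expectation (trans_pmf N M Mc Nc \<alpha> Q u) (\<lambda>Q'. \<Sum>(n, m)\<in>SIdx N Mc. V n m (Q' (n, m)))
       = (\<Sum>(n, m)\<in>SIdx N Mc. comp_cost w p n m (Q (n, m)) u
           + measure_pmf.expectation (comp_trans_pmf N M Mc Nc \<alpha> n m (Q (n, m)) u) (V n m))"
  using cost_eq_sum_comp_cost[where p=p and w=w and Q=Q, OF assms]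
    expectation_trans_pmf_separable[OF finite_SIdx[OF assms(1)], of M Nc \<alpha> Q u V]
  by (simp add: sum.distrib case_prod_beta)

theorem lemma4:
  fixes N M :: nat
    and Mc :: "nat \<Rightarrow> nat set"
    and Nc :: "nat \<Rightarrow> nat \<Rightarrow> nat"
    and p :: "nat \<Rightarrow> nat \<Rightarrow> real"
    and w :: real
    and \<alpha> :: "nat \<Rightarrow> nat \<Rightarrow> nat pmf"
    and \<mu> :: "(nat \<Rightarrow> nat) pmf"
    and \<theta>c :: "nat \<Rightarrow> nat \<Rightarrow> real"
    and Vc :: "nat \<Rightarrow> nat \<Rightarrow> nat \<Rightarrow> real"
  assumes "N \<ge> 1"
    and "Mc 0 = {1..M}"
    and "\<forall>n\<in>{1..N}. Mc n \<subseteq> {1..M}"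
    and "\<forall>(n, m)\<in>SIdx N Mc. Nc n m > 0"
    and "\<forall>(n, m)\<in>SIdx N Mc. p n m \<ge> 0"
    and "\<forall>n\<le>N. p n 0 = 0"
    and "w \<ge> 0"
    and "set_pmf \<mu> \<subseteq> actions N Mc"
    and bellman_comp: "\<forall>(n, m)\<in>SIdx N Mc. \<forall>q\<in>{0..Nc n m}.
          \<theta>c n m + Vc n m q =
            measure_pmf.expectation \<mu> (\<lambda>u. comp_cost w p n m q u)
            + (\<Sum>q'\<in>{0..Nc n m}.
                 measure_pmf.expectation \<mu> (\<lambda>u. pmf (comp_trans_pmf N M Mc Nc \<alpha> n m q u) q')
                 * Vc n m q')"
  shows "\<forall>Q\<in>states N Mc Nc.
           (\<Sum>(n, m)\<in>SIdx N Mc. \<theta>c n m) + (\<Sum>(n, m)\<in>SIdx N Mc. Vc n m (Q (n, m))) =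
             measure_pmf.expectation \<mu> (\<lambda>u. cost N Mc w p Q u)
             + (\<Sum>Q'\<in>states N Mc Nc.
                  measure_pmf.expectation \<mu> (\<lambda>u. pmf (trans_pmf N M Mc Nc \<alpha> Q u) Q')
                  * (\<Sum>(n, m)\<in>SIdx N Mc. Vc n m (Q' (n, m))))"
proof
  fix Q assume Q: "Q \<in> states N Mc Nc"
  have fin_Mc: "\<forall>n\<le>N. finite (Mc n)"
    using finite_cache_sets[OF assms(2,3)] .
  have fin_\<mu>: "finite (set_pmf \<mu>)"
    using assms(8) finite_actions[OF fin_Mc] by (rule finite_subset)
  have pair: "\<theta>c n m + Vc n m (Q (n, m)) = measure_pmf.expectation \<mu> (\<lambda>u. comp_cost w p n m (Q (n, m)) u
      + measure_pmf.expectation (comp_trans_pmf N M Mc Nc \<alpha> n m (Q (n, m)) u) (Vc n m))"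
    if "(n, m) \<in> SIdx N Mc" for n m
  proof -
    have "Q (n, m) \<in> {0..Nc n m}"
      using Q that by (auto simp: states_def)
    then show ?thesis
      using bellman_comp that fin_\<mu>
      by (auto simp: expectation_mixture_pmf set_comp_trans_pmf integrable_measure_pmf_finite)
  qed
  have "(\<Sum>(n, m)\<in>SIdx N Mc. \<theta>c n m) + (\<Sum>(n, m)\<in>SIdx N Mc. Vc n m (Q (n, m)))
      = (\<Sum>(n, m)\<in>SIdx N Mc. measure_pmf.expectation \<mu> (\<lambda>u. comp_cost w p n m (Q (n, m)) u
          + measure_pmf.expectation (comp_trans_pmf N M Mc Nc \<alpha> n m (Q (n, m)) u) (Vc n m)))"
    unfolding sum.distrib[symmetric] by (intro sum.cong) (auto simp: pair)
  also have "\<dots> = measure_pmf.expectation \<mu> (\<lambda>u. \<Sum>(n, m)\<in>SIdx N Mc. comp_cost w p n m (Q (n, m)) u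
          + measure_pmf.expectation (comp_trans_pmf N M Mc Nc \<alpha> n m (Q (n, m)) u) (Vc n m))"
    using fin_\<mu> by (simp add: case_prod_beta integrable_measure_pmf_finite)
  also have "\<dots> = measure_pmf.expectation \<mu> (\<lambda>u. cost N Mc w p Q u
      + measure_pmf.expectation (trans_pmf N M Mc Nc \<alpha> Q u) (\<lambda>Q'. \<Sum>(n, m)\<in>SIdx N Mc. Vc n m (Q' (n, m))))"
    using assms(6,8) by (intro integral_cong_AE)
      (auto simp: AE_measure_pmf_iff cost_plus_expected_value_separable[OF fin_Mc])
  also have "\<dots> = measure_pmf.expectation \<mu> (\<lambda>u. cost N Mc w p Q u)
      + (\<Sum>Q'\<in>states N Mc Nc. measure_pmf.expectation \<mu> (\<lambda>u. pmf (trans_pmf N M Mc Nc \<alpha> Q u) Q')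
          * (\<Sum>(n, m)\<in>SIdx N Mc. Vc n m (Q' (n, m))))"
    using fin_\<mu> finite_states[OF finite_SIdx[OF fin_Mc]] set_trans_pmf
    by (simp add: integrable_measure_pmf_finite expectation_mixture_pmf)
  finally show "(\<Sum>(n, m)\<in>SIdx N Mc. \<theta>c n m) + (\<Sum>(n, m)\<in>SIdx N Mc. Vc n m (Q (n, m))) =
             measure_pmf.expectation \<mu> (\<lambda>u. cost N Mc w p Q u)
             + (\<Sum>Q'\<in>states N Mc Nc.
                  measure_pmf.expectation \<mu> (\<lambda>u. pmf (trans_pmf N M Mc Nc \<alpha> Q u) Q')
                  * (\<Sum>(n, m)\<in>SIdx N Mc. Vc n m (Q' (n, m))))" .
qed

end
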